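(* For the 1-nearest-neighbor (1-NN) learning algorithm, there exist noisy-label data distributions (i.e. two group distributions $D_A,D_B$ over $\mathcal{X}\times\{-1,1\}$, with $\mathcal{X}$ a metric space, under which labels are subject to random flipping) and a training-set size $n$ such that the induced evolutionary prediction game has a stable coexistence equilibrium, i.e. a stable Nash equilibrium $\mathbf{p}^*$ with $p^*_A>0$ and $p^*_B>0$.
   Context: 1-NN: given a training set $S=\{(x_i,y_i)\}_{i=1}^n$, predicts for $x$ the label of its nearest training point. The learning algorithm samples $S\sim D_{\mathbf{p}}^n$ i.i.d. from the mixture $D_{\mathbf{p}}=p_AD_A+p_BD_B$ ($\mathbf{p}\in\Delta^2$) and outputs the 1-NN classifier $h_S$. The evolutionary prediction game is $F_k(\mathbf{p})=\mathbb{E}_{S}[\Pr_{(x,y)\sim D_k}[h_S(x)=y]]$. Nash equilibrium: $\mathrm{supp}(\mathbf{p}^* )\subseteq\arg\max_kF_k(\mathbf{p}^* )$. Stability refers to population dynamics $\dot{\mathbf{p}}=V_F(\mathbf{p})$ with $V_F$ continuous, tangent to the simplex, positively correlated with $F$, and Nash-stationary or imitative (e.g. replicator); an equilibrium is stable if it attracts all nearby states. *)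

theory Defs
  imports "HOL-Probability.Probability"
begin

datatype grp = GA | GB

definition coord :: "grp \<Rightarrow> real \<times> real \<Rightarrow> real" where
  "coord k p = (case k of GA \<Rightarrow> fst p | GB \<Rightarrow> snd p)"

definition simplex2 :: "(real \<times> real) set" where
  "simplex2 = {p. fst p \<ge> 0 \<and> snd p \<ge> 0 \<and> fst p + snd p = 1}"

definition mixture :: "real \<times> real \<Rightarrow> 'a pmf \<Rightarrow> 'a pmf \<Rightarrow> 'a pmf" where
  "mixture p DA DB = bind_pmf (bernoulli_pmf (fst p)) (\<lambda>b. if b then DA else DB)"

fun iid_pmf :: "nat \<Rightarrow> 'a pmf \<Rightarrow> 'a list pmf" where
  "iid_pmf 0 D = return_pmf []"
| "iid_pmf (Suc n) D = bind_pmf D (\<lambda>z. map_pmf (\<lambda>zs. z # zs) (iid_pmf n D))"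

text \<open>1-NN prediction: label of the nearest training point; ties broken in favour of the
  smallest index (by exchangeability of i.i.d. samples this equals uniform random tie-breaking
  in distribution).\<close>
definition nn_index :: "('x::metric_space \<times> int) list \<Rightarrow> 'x \<Rightarrow> nat" where
  "nn_index S x = (LEAST i. i < length S \<and>
      (\<forall>j < length S. dist (fst (S ! i)) x \<le> dist (fst (S ! j)) x))"

definition nn_predict :: "('x::metric_space \<times> int) list \<Rightarrow> 'x \<Rightarrow> int" where
  "nn_predict S x = snd (S ! nn_index S x)"

definition nn_game :: "nat \<Rightarrow> ('x::metric_space \<times> int) pmf \<Rightarrow> ('x \<times> int) pmf
    \<Rightarrow> grp \<Rightarrow> real \<times> real \<Rightarrow> real" where
  "nn_game n DA DB k p =
     measure_pmf.expectation (iid_pmf n (mixture p DA DB))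
       (\<lambda>S. measure_pmf.prob (case k of GA \<Rightarrow> DA | GB \<Rightarrow> DB)
               {z. nn_predict S (fst z) = snd z})"

definition noisy_label_pmf ::
    "('x \<times> int) pmf \<Rightarrow> 'x pmf \<Rightarrow> ('x \<Rightarrow> int) \<Rightarrow> real \<Rightarrow> bool" where
  "noisy_label_pmf D mu h eta \<longleftrightarrow>
     (\<forall>x. h x \<in> {-1, 1}) \<and> 0 \<le> eta \<and> eta < 1/2 \<and>
     D = bind_pmf mu (\<lambda>x. map_pmf (\<lambda>flip. (x, if flip then - h x else h x)) (bernoulli_pmf eta))"

definition Fvec :: "(grp \<Rightarrow> real \<times> real \<Rightarrow> real) \<Rightarrow> real \<times> real \<Rightarrow> real \<times> real" where
  "Fvec F p = (F GA p, F GB p)"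

definition nash_eq :: "(grp \<Rightarrow> real \<times> real \<Rightarrow> real) \<Rightarrow> real \<times> real \<Rightarrow> bool" where
  "nash_eq F p \<longleftrightarrow> p \<in> simplex2 \<and>
     (\<forall>k. coord k p > 0 \<longrightarrow> (\<forall>j. F j p \<le> F k p))"

definition tangent_simplex :: "(real \<times> real \<Rightarrow> real \<times> real) \<Rightarrow> bool" where
  "tangent_simplex V \<longleftrightarrow> (\<forall>p \<in> simplex2. fst (V p) + snd (V p) = 0 \<and>
     (\<forall>k. coord k p = 0 \<longrightarrow> coord k (V p) \<ge> 0))"

definition pos_correlated :: "(grp \<Rightarrow> real \<times> real \<Rightarrow> real) \<Rightarrow> (real \<times> real \<Rightarrow> real \<times> real) \<Rightarrow> bool" where
  "pos_correlated F V \<longleftrightarrow> (\<forall>p \<in> simplex2. V p \<noteq> 0 \<longrightarrow> V p \<bullet> Fvec F p > 0)"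

definition nash_stationary :: "(grp \<Rightarrow> real \<times> real \<Rightarrow> real) \<Rightarrow> (real \<times> real \<Rightarrow> real \<times> real) \<Rightarrow> bool" where
  "nash_stationary F V \<longleftrightarrow> (\<forall>p \<in> simplex2. V p = 0 \<longleftrightarrow> nash_eq F p)"

text \<open>Imitative dynamics: V_k(p) = p_k G_k(p) with percentage growth rates monotone in payoffs
  (the replicator dynamic is the case G_k(p) = F_k(p) - sum_j p_j F_j(p)).\<close>
definition imitative :: "(grp \<Rightarrow> real \<times> real \<Rightarrow> real) \<Rightarrow> (real \<times> real \<Rightarrow> real \<times> real) \<Rightarrow> bool" where
  "imitative F V \<longleftrightarrow> (\<exists>G :: grp \<Rightarrow> real \<times> real \<Rightarrow> real. \<forall>p \<in> simplex2.
      (\<forall>k. coord k (V p) = coord k p * G k p) \<and>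
      (\<forall>i j. G i p \<le> G j p \<longleftrightarrow> F i p \<le> F j p))"

definition admissible_dynamics :: "(grp \<Rightarrow> real \<times> real \<Rightarrow> real) \<Rightarrow> (real \<times> real \<Rightarrow> real \<times> real) \<Rightarrow> bool" where
  "admissible_dynamics F V \<longleftrightarrow> continuous_on simplex2 V \<and> tangent_simplex V \<and>
     pos_correlated F V \<and> (nash_stationary F V \<or> imitative F V)"

definition stable_under :: "(real \<times> real \<Rightarrow> real \<times> real) \<Rightarrow> real \<times> real \<Rightarrow> bool" where
  "stable_under V q \<longleftrightarrow> (\<exists>\<epsilon> > 0. \<forall>x :: real \<Rightarrow> real \<times> real.
      (\<forall>t \<ge> 0. x t \<in> simplex2 \<and> (x has_vector_derivative V (x t)) (at t within {0..})) \<and>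
      dist (x 0) q < \<epsilon> \<longrightarrow> (x \<longlongrightarrow> q) at_top)"

definition stable_equilibrium :: "(grp \<Rightarrow> real \<times> real \<Rightarrow> real) \<Rightarrow> real \<times> real \<Rightarrow> bool" where
  "stable_equilibrium F q \<longleftrightarrow> nash_eq F q \<and>
     (\<forall>V. admissible_dynamics F V \<longrightarrow> stable_under V q)"

end

theory Submission
  imports Defs
begin

text \<open>
  Take features 0, 1, 3 on the real line; the clean labellings of the two groups disagree at 0
  and at 1, and both groups have label noise. With two training samples the payoff F_k is a
  quadratic in p_A, since the training pair is drawn from D_A D_A, D_A D_B, D_B D_A or D_B D_B
  with weights p_A^2, p_A p_B, p_B p_A, p_B^2. For the chosen weights the payoff gap F_A - F_B
  is positive at p_A = 0, negative at p_A = 1/10 and decreasing in between, so it vanishes at some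
  interior q where it changes sign from + to -. Positive correlation together with Nash
  stationarity or imitation forces every admissible dynamic to move p_A in the direction of the
  payoff gap at interior non-equilibria, i.e. toward q from both sides. Along a trajectory
  (p_A - q)^2 is then nonincreasing, and by compactness it decreases at a uniform rate while
  p_A stays away from q, so trajectories starting near q converge to it.
\<close>

lemma expectation_bind_pmf_finite:
  fixes h :: "'b \<Rightarrow> real"
  assumes "finite (set_pmf M)" "\<And>x. x \<in> set_pmf M \<Longrightarrow> finite (set_pmf (N x))"
  shows "measure_pmf.expectation (bind_pmf M N) h =
         measure_pmf.expectation M (\<lambda>x. measure_pmf.expectation (N x) h)"
proof -
  have "measure_pmf.expectation (bind_pmf M N) h =
        (\<Sum>a\<in>set_pmf M. pmf M a *\<^sub>R measure_pmf.expectation (N a) h)"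
    by (rule pmf_expectation_bind) (use assms in auto)
  also have "\<dots> = measure_pmf.expectation M (\<lambda>x. measure_pmf.expectation (N x) h)"
    by (subst integral_measure_pmf[of "set_pmf M"]) (use assms in auto)
  finally show ?thesis .
qed

lemma expectation_linear_finite:
  fixes f g :: "'a \<Rightarrow> real"
  assumes "finite (set_pmf D)"
  shows "measure_pmf.expectation D (\<lambda>z. a * f z + b * g z) =
         a * measure_pmf.expectation D f + b * measure_pmf.expectation D g"
  using assms by (simp add: integrable_measure_pmf_finite)

lemma finite_set_pmf_mixture:
  "finite (set_pmf DA) \<Longrightarrow> finite (set_pmf DB) \<Longrightarrow> finite (set_pmf (mixture p DA DB))"
  unfolding mixture_def by (simp add: set_bind_pmf)

lemma expectation_mixture:
  fixes h :: "'a \<Rightarrow> real"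
  assumes "finite (set_pmf DA)" "finite (set_pmf DB)" "0 \<le> fst p" "fst p \<le> 1"
  shows "measure_pmf.expectation (mixture p DA DB) h =
    fst p * measure_pmf.expectation DA h + (1 - fst p) * measure_pmf.expectation DB h"
  unfolding mixture_def by (subst expectation_bind_pmf_finite) (use assms in auto)

lemma expectation_iid_pmf_2:
  fixes f :: "'a list \<Rightarrow> real"
  assumes "finite (set_pmf D)"
  shows "measure_pmf.expectation (iid_pmf 2 D) f =
     measure_pmf.expectation D (\<lambda>z1. measure_pmf.expectation D (\<lambda>z2. f [z1, z2]))"
proof -
  have "iid_pmf 2 D = bind_pmf D (\<lambda>z1. map_pmf (\<lambda>z2. [z1, z2]) D)"
    by (simp add: numeral_2_eq_2 map_pmf_def bind_return_pmf bind_assoc_pmf)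
  then show ?thesis
    using assms by (simp add: expectation_bind_pmf_finite)
qed

lemma nn_predict_two_points:
  "nn_predict [z1, z2] x = (if dist (fst z1) x \<le> dist (fst z2) x then snd z1 else snd z2)"
proof (cases "dist (fst z1) x \<le> dist (fst z2) x")
  case True
  have "nn_index [z1, z2] x = 0"
    unfolding nn_index_def by (rule Least_eq_0) (use True in \<open>auto simp: less_Suc_eq\<close>)
  then show ?thesis using True by (simp add: nn_predict_def)
next
  case False
  have "nn_index [z1, z2] x = 1"
    unfolding nn_index_def by (rule Least_equality) (use False in \<open>auto simp: less_Suc_eq\<close>)
  then show ?thesis using False by (simp add: nn_predict_def)
qed

definition nn2_accuracy ::
    "('x::metric_space \<times> int) pmf \<Rightarrow> ('x \<times> int) pmf \<Rightarrow> ('x \<times> int) pmf \<Rightarrow> real" where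
  "nn2_accuracy D D1 D2 =
     measure_pmf.expectation D1 (\<lambda>z1. measure_pmf.expectation D2 (\<lambda>z2.
       measure_pmf.prob D {z. nn_predict [z1, z2] (fst z) = snd z}))"

lemma nn_game_2:
  assumes "finite (set_pmf DA)" "finite (set_pmf DB)" "p \<in> simplex2"
    and D: "D = (case k of GA \<Rightarrow> DA | GB \<Rightarrow> DB)"
  shows "nn_game 2 DA DB k p =
    (fst p)\<^sup>2 * nn2_accuracy D DA DA
    + fst p * (1 - fst p) * (nn2_accuracy D DA DB + nn2_accuracy D DB DA)
    + (1 - fst p)\<^sup>2 * nn2_accuracy D DB DB"
proof -
  have p: "0 \<le> fst p" "fst p \<le> 1" using \<open>p \<in> simplex2\<close> by (auto simp: simplex2_def)
  note mix = expectation_mixture[OF assms(1,2) p] expectation_linear_finite[OF assms(1)]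
    expectation_linear_finite[OF assms(2)]
  show ?thesis
    unfolding nn_game_def nn2_accuracy_def D[symmetric]
    by (simp add: expectation_iid_pmf_2 finite_set_pmf_mixture assms(1,2) mix)
      (simp add: algebra_simps power2_eq_square)
qed

section \<open>A scalar ODE with an attracting rest point\<close>

lemma sq_diff_le_if_drift_le:
  fixes u v :: "real \<Rightarrow> real"
  assumes "a \<le> b" and cont: "continuous_on {a..b} u"
    and der: "\<And>t. a < t \<Longrightarrow> t < b \<Longrightarrow> (u has_real_derivative v (u t)) (at t)"
    and drift: "\<And>t. a < t \<Longrightarrow> t < b \<Longrightarrow> (u t - q) * v (u t) \<le> M"
  shows "(u b - q)\<^sup>2 \<le> (u a - q)\<^sup>2 + 2 * M * (b - a)"
proof -
  have "(u b - q)\<^sup>2 - 2 * M * b \<le> (u a - q)\<^sup>2 - 2 * M * a"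
  proof (rule DERIV_nonpos_imp_decreasing_open[OF \<open>a \<le> b\<close>])
    fix t assume t: "a < t" "t < b"
    have "((\<lambda>t. (u t - q)\<^sup>2 - 2 * M * t) has_real_derivative
            2 * ((u t - q) * v (u t)) - 2 * M) (at t)"
      by (rule derivative_eq_intros der[OF t] | simp)+
    with drift[OF t]
    show "\<exists>y. ((\<lambda>t. (u t - q)\<^sup>2 - 2 * M * t) has_real_derivative y) (at t) \<and> y \<le> 0"
      by (intro exI conjI) auto
  qed (intro continuous_intros cont)
  then show ?thesis by (simp add: algebra_simps)
qed

lemma abs_diff_antimono_if_inward:
  fixes u v :: "real \<Rightarrow> real"
  assumes "a \<le> b" "continuous_on {a..b} u"
    and "\<And>t. a < t \<Longrightarrow> t < b \<Longrightarrow> (u has_real_derivative v (u t)) (at t)"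
    and "\<And>t. a < t \<Longrightarrow> t < b \<Longrightarrow> (u t - q) * v (u t) \<le> 0"
  shows "\<bar>u b - q\<bar> \<le> \<bar>u a - q\<bar>"
  using sq_diff_le_if_drift_le[of a b u v q 0] assms by (simp add: abs_le_square_iff)

lemma abs_diff_le_initial_if_inward:
  fixes u v :: "real \<Rightarrow> real"
  assumes cont: "continuous_on {0..} u"
    and der: "\<And>t. 0 < t \<Longrightarrow> (u has_real_derivative v (u t)) (at t)"
    and inward: "\<And>s. \<bar>s - q\<bar> \<le> \<delta> \<Longrightarrow> (s - q) * v s \<le> 0"
    and init: "\<bar>u 0 - q\<bar> < \<delta>" and "0 \<le> t"
  shows "\<bar>u t - q\<bar> \<le> \<bar>u 0 - q\<bar>"
proof -
  have antimono: "\<bar>u b - q\<bar> \<le> \<bar>u 0 - q\<bar>"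
    if "0 \<le> b" and near: "\<And>s. 0 < s \<Longrightarrow> s < b \<Longrightarrow> \<bar>u s - q\<bar> \<le> \<delta>" for b
    using that by (intro abs_diff_antimono_if_inward[where v = v] continuous_on_subset[OF cont]
        der inward near) auto
  define \<delta>' where "\<delta>' = (\<bar>u 0 - q\<bar> + \<delta>) / 2"
  have \<delta>': "\<bar>u 0 - q\<bar> < \<delta>'" "\<delta>' < \<delta>" using init by (auto simp: \<delta>'_def)
  have inside: "\<bar>u s - q\<bar> < \<delta>'" if "0 \<le> s" for s
  proof (rule ccontr)
    assume far: "\<not> ?thesis"
    \<comment> \<open>look at the first time the trajectory reaches distance \<open>\<delta>'\<close> from \<open>q\<close>\<close>
    define S where "S = {0..s} \<inter> (\<lambda>r. \<bar>u r - q\<bar>) -` {\<delta>'..}"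
    have "closed S"
      unfolding S_def by (intro continuous_closed_preimage continuous_intros
          continuous_on_subset[OF cont]) auto
    moreover have "s \<in> S" using far that by (auto simp: S_def)
    moreover have "bdd_below S" by (auto simp: S_def intro: bdd_belowI[of _ 0])
    ultimately have "Inf S \<in> S" using closed_contains_Inf by blast
    have "\<bar>u r - q\<bar> \<le> \<delta>" if "0 < r" "r < Inf S" for r
      using cInf_lower[OF _ \<open>bdd_below S\<close>, of r] \<open>Inf S \<in> S\<close> that \<delta>' by (force simp: S_def)
    then have "\<bar>u (Inf S) - q\<bar> \<le> \<bar>u 0 - q\<bar>"
      using \<open>Inf S \<in> S\<close> \<delta>' by (intro antimono) (auto simp: S_def)
    with \<open>Inf S \<in> S\<close> \<delta>' show False by (auto simp: S_def)
  qed
  have "\<bar>u s - q\<bar> \<le> \<delta>" if "0 < s" for s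
    using inside[of s] \<delta>'(2) that by simp
  with \<open>0 \<le> t\<close> show ?thesis by (intro antimono)
qed

lemma ode_exits_compact_if_inward:
  fixes u v :: "real \<Rightarrow> real"
  assumes ucont: "continuous_on {0..} u"
    and uder: "\<And>t. 0 < t \<Longrightarrow> (u has_real_derivative v (u t)) (at t)"
    and "compact K" and cont: "continuous_on K (\<lambda>s. (s - q) * v s)"
    and inward: "\<And>s. s \<in> K \<Longrightarrow> (s - q) * v s < 0"
  shows "\<exists>t\<ge>0. u t \<notin> K"
proof (rule ccontr)
  assume "\<not> ?thesis"
  then have uK: "u t \<in> K" if "0 \<le> t" for t
    using that by blast
  \<comment> \<open>on \<open>K\<close> the drift toward \<open>q\<close> is bounded away from zero\<close>
  obtain s0 where s0: "s0 \<in> K" "\<And>s. s \<in> K \<Longrightarrow> (s - q) * v s \<le> (s0 - q) * v s0"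
    using continuous_attains_sup[OF \<open>compact K\<close> _ cont] uK[of 0] by blast
  define M where "M = (s0 - q) * v s0"
  have "M < 0" using inward[OF s0(1)] by (simp add: M_def)
  define T where "T = ((u 0 - q)\<^sup>2 + 1) / (- 2 * M)"
  have "T \<ge> 0" unfolding T_def using \<open>M < 0\<close> by (intro divide_nonneg_pos) auto
  have "(u T - q)\<^sup>2 \<le> (u 0 - q)\<^sup>2 + 2 * M * (T - 0)"
    using \<open>T \<ge> 0\<close> s0(2)[OF uK]
    by (intro sq_diff_le_if_drift_le[where v = v] continuous_on_subset[OF ucont] uder)
      (auto simp: M_def)
  also have "\<dots> = - 1"
    unfolding T_def using \<open>M < 0\<close> by (simp add: field_simps)
  finally show False by (smt (verit) zero_le_power2)
qed

lemma tendsto_rest_point_if_inward: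
  fixes u v :: "real \<Rightarrow> real"
  assumes der: "\<And>t. 0 \<le> t \<Longrightarrow> (u has_real_derivative v (u t)) (at t within {0..})"
    and cont: "continuous_on {q-\<delta>..q+\<delta>} v"
    and inward: "\<And>s. \<bar>s - q\<bar> \<le> \<delta> \<Longrightarrow> s \<noteq> q \<Longrightarrow> (s - q) * v s < 0"
    and init: "\<bar>u 0 - q\<bar> < \<delta>"
  shows "(u \<longlongrightarrow> q) at_top"
proof -
  have ucont: "continuous_on {0..} u"
    unfolding continuous_on_eq_continuous_within
    using der by (auto intro: has_derivative_continuous simp: has_field_derivative_def)
  have uder: "(u has_real_derivative v (u t)) (at t)" if "t > 0" for t
    using der[of t] at_within_interior[of t "{0..}"] that by simp
  have inward_le: "(s - q) * v s \<le> 0" if "\<bar>s - q\<bar> \<le> \<delta>" for s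
    using inward[OF that] by (cases "s = q") auto
  define r where "r = \<bar>u 0 - q\<bar>"
  have trapped: "\<bar>u t - q\<bar> \<le> r" if "0 \<le> t" for t
    unfolding r_def by (rule abs_diff_le_initial_if_inward[OF ucont uder inward_le init that])
  have near: "\<bar>u t - q\<bar> \<le> \<delta>" if "0 \<le> t" for t
    using trapped[OF that] init by (simp add: r_def)
  have "eventually (\<lambda>t. \<bar>u t - q\<bar> < e) at_top" if "e > 0" for e
  proof (rule ccontr)
    assume not_eventually: "\<not> ?thesis"
    have far: "e \<le> \<bar>u t - q\<bar>" if "0 \<le> t" for t
    proof (rule ccontr)
      assume close: "\<not> ?thesis"
      have "\<bar>u t' - q\<bar> \<le> \<bar>u t - q\<bar>" if "t \<le> t'" for t'
        using \<open>0 \<le> t\<close> that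
        by (intro abs_diff_antimono_if_inward[where u = u and v = v]
            continuous_on_subset[OF ucont] uder inward_le near) auto
      then have "eventually (\<lambda>t'. \<bar>u t' - q\<bar> < e) at_top"
        using close unfolding eventually_at_top_linorder
        by (intro exI[of _ t] allI impI) (meson le_less_trans not_le)
      with not_eventually show False by blast
    qed
    define K where "K = {s. e \<le> \<bar>s - q\<bar> \<and> \<bar>s - q\<bar> \<le> r}"
    have "K \<subseteq> cball q r" by (auto simp: K_def dist_real_def abs_minus_commute)
    moreover have "closed K"
      unfolding K_def by (intro closed_Collect_conj closed_Collect_le continuous_intros)
    ultimately have "compact K"
      by (meson bounded_cball bounded_subset compact_eq_bounded_closed)
    moreover have "continuous_on K (\<lambda>s. (s - q) * v s)"
      using init by (intro continuous_intros continuous_on_subset[OF cont])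
        (auto simp: K_def r_def abs_le_iff)
    moreover have "(s - q) * v s < 0" if "s \<in> K" for s
      using that \<open>e > 0\<close> init by (intro inward) (auto simp: K_def r_def)
    ultimately obtain t where "0 \<le> t" "u t \<notin> K"
      using ode_exits_compact_if_inward[OF ucont uder] by blast
    with far trapped show False by (auto simp: K_def)
  qed
  then show ?thesis
    unfolding tendsto_iff dist_real_def by blast
qed

section \<open>Stability of interior equilibria of two-group games\<close>

lemma nash_eq_interior_iff:
  assumes "p \<in> simplex2" "0 < fst p" "0 < snd p"
  shows "nash_eq F p \<longleftrightarrow> F GA p = F GB p"
proof
  assume "nash_eq F p"
  then have "F GB p \<le> F GA p" "F GA p \<le> F GB p"
    using assms unfolding nash_eq_def coord_def by (metis grp.case)+
  then show "F GA p = F GB p" by simp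
next
  assume "F GA p = F GB p"
  then have "F j p \<le> F k p" for j k by (cases j; cases k) auto
  with assms show "nash_eq F p" by (simp add: nash_eq_def)
qed

lemma inner_Fvec_tangent:
  assumes "tangent_simplex V" "p \<in> simplex2"
  shows "V p \<bullet> Fvec F p = fst (V p) * (F GA p - F GB p)"
proof -
  have "fst (V p) + snd (V p) = 0" using assms by (simp add: tangent_simplex_def)
  then have "snd (V p) = - fst (V p)" by linarith
  then show ?thesis by (simp add: Fvec_def inner_prod_def algebra_simps)
qed

lemma admissible_dynamics_nonzero_off_equilibrium:
  assumes adm: "admissible_dynamics F V"
    and p: "p \<in> simplex2" "0 < fst p" "0 < snd p" and gap: "F GA p \<noteq> F GB p"
  shows "V p \<noteq> 0"
  using adm unfolding admissible_dynamics_def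
proof (elim conjE disjE)
  assume "nash_stationary F V"
  with p gap show ?thesis by (simp add: nash_stationary_def nash_eq_interior_iff)
next
  assume "imitative F V"
  then obtain G where G: "\<And>k. coord k (V p) = coord k p * G k p"
      "\<And>i j. G i p \<le> G j p \<longleftrightarrow> F i p \<le> F j p"
    using p(1) unfolding imitative_def by blast
  show ?thesis
  proof
    assume "V p = 0"
    then have "G GA p = 0" "G GB p = 0"
      using G(1)[of GA] G(1)[of GB] p by (auto simp: coord_def)
    then have "F GA p \<le> F GB p" "F GB p \<le> F GA p" using G(2) by (metis order_refl)+
    with gap show False by simp
  qed
qed

lemma admissible_dynamics_follows_payoff_gap:
  assumes "admissible_dynamics F V"
    and "p \<in> simplex2" "0 < fst p" "0 < snd p" "F GA p \<noteq> F GB p"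
  shows "0 < fst (V p) * (F GA p - F GB p)"
  using assms admissible_dynamics_nonzero_off_equilibrium[OF assms] inner_Fvec_tangent[of V p F]
  unfolding admissible_dynamics_def pos_correlated_def by auto

lemma has_vector_derivative_imp_fst:
  "(x has_vector_derivative w) F \<Longrightarrow> ((\<lambda>t. fst (x t)) has_real_derivative fst w) F"
  unfolding has_vector_derivative_def has_field_derivative_def
  by (drule has_derivative_fst) (erule has_derivative_eq_rhs, auto simp: fun_eq_iff)

lemma stable_under_if_inward:
  assumes cont: "continuous_on simplex2 V" and "0 < \<delta>" "\<delta> \<le> q" "q + \<delta> \<le> 1"
    and inward: "\<And>s. \<bar>s - q\<bar> \<le> \<delta> \<Longrightarrow> s \<noteq> q \<Longrightarrow> (s - q) * fst (V (s, 1 - s)) < 0"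
  shows "stable_under V (q, 1 - q)"
  unfolding stable_under_def
proof (intro exI[of _ \<delta>] conjI allI impI)
  fix x :: "real \<Rightarrow> real \<times> real"
  assume x: "(\<forall>t\<ge>0. x t \<in> simplex2 \<and> (x has_vector_derivative V (x t)) (at t within {0..}))
    \<and> dist (x 0) (q, 1 - q) < \<delta>"
  have x_in: "x t \<in> simplex2" and x_der: "(x has_vector_derivative V (x t)) (at t within {0..})"
    if "0 \<le> t" for t
    using x that by blast+
  have on_line: "x t = (fst (x t), 1 - fst (x t))" if "0 \<le> t" for t
    using x_in[OF that] by (simp add: simplex2_def prod_eq_iff)
  have "((\<lambda>t. fst (x t)) \<longlongrightarrow> q) at_top"
  proof (rule tendsto_rest_point_if_inward[where v = "\<lambda>s. fst (V (s, 1 - s))"])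
    fix t :: real assume "0 \<le> t"
    note x_der[OF this]
    then have "((\<lambda>t. fst (x t)) has_real_derivative fst (V (x t))) (at t within {0..})"
      by (rule has_vector_derivative_imp_fst)
    then show "((\<lambda>t. fst (x t)) has_real_derivative fst (V (fst (x t), 1 - fst (x t))))
        (at t within {0..})"
      using on_line[OF \<open>0 \<le> t\<close>] by metis
  next
    show "continuous_on {q-\<delta>..q+\<delta>} (\<lambda>s. fst (V (s, 1 - s)))"
      using assms(2-4)
      by (intro continuous_on_fst continuous_on_compose2[OF cont] continuous_intros)
        (auto simp: simplex2_def)
  next
    show "\<bar>fst (x 0) - q\<bar> < \<delta>"
      using x dist_fst_le[of "x 0" "(q, 1 - q)"] by (auto simp: dist_real_def)
  qed (rule inward)
  then have "((\<lambda>t. (fst (x t), 1 - fst (x t))) \<longlongrightarrow> (q, 1 - q)) at_top"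
    by (intro tendsto_intros)
  moreover have "eventually (\<lambda>t. (fst (x t), 1 - fst (x t)) = x t) at_top"
    using eventually_ge_at_top[of 0] by eventually_elim (use on_line in auto)
  ultimately show "(x \<longlongrightarrow> (q, 1 - q)) at_top"
    by (rule Lim_transform_eventually)
qed (fact \<open>0 < \<delta>\<close>)

lemma stable_equilibrium_if_gap_crosses_down:
  assumes "0 < \<delta>" "\<delta> < q" "q + \<delta> < 1"
    and eq: "F GA (q, 1 - q) = F GB (q, 1 - q)"
    and cross: "\<And>s. \<bar>s - q\<bar> \<le> \<delta> \<Longrightarrow> s \<noteq> q \<Longrightarrow>
      (s - q) * (F GA (s, 1 - s) - F GB (s, 1 - s)) < 0"
  shows "stable_equilibrium F (q, 1 - q)"
proof -
  have interior: "(s, 1 - s) \<in> simplex2" "0 < s" "0 < 1 - s" if "\<bar>s - q\<bar> \<le> \<delta>" for s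
    using that assms(1-3) by (auto simp: simplex2_def)
  have "nash_eq F (q, 1 - q)"
    using interior[of q] eq assms(1) by (simp add: nash_eq_interior_iff)
  moreover have "stable_under V (q, 1 - q)" if adm: "admissible_dynamics F V" for V
  proof (rule stable_under_if_inward)
    show "continuous_on simplex2 V" using adm by (simp add: admissible_dynamics_def)
  next
    fix s assume s: "\<bar>s - q\<bar> \<le> \<delta>" "s \<noteq> q"
    then have "F GA (s, 1 - s) \<noteq> F GB (s, 1 - s)" using cross[OF s] by auto
    with interior[OF s(1)]
    have "0 < fst (V (s, 1 - s)) * (F GA (s, 1 - s) - F GB (s, 1 - s))"
      by (intro admissible_dynamics_follows_payoff_gap[OF adm]) simp_all
    with cross[OF s] show "(s - q) * fst (V (s, 1 - s)) < 0"
      by (auto simp: zero_less_mult_iff mult_less_0_iff)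
  qed (use assms in auto)
  ultimately show ?thesis by (simp add: stable_equilibrium_def)
qed

section \<open>A noisy-label example with a stable coexistence equilibrium\<close>

definition label_A :: "real \<Rightarrow> int" where
  "label_A x = (if x = 0 then -1 else 1)"

definition label_B :: "real \<Rightarrow> int" where
  "label_B x = (if x = 1 then -1 else 1)"

text \<open>Masses 9/50, 1/4, 57/100 at the points 0, 1, 3.\<close>
definition mu_A :: "real pmf" where
  "mu_A = bind_pmf (bernoulli_pmf (9/50)) (\<lambda>b. if b then return_pmf 0 else
      map_pmf (\<lambda>c. if c then 1 else 3) (bernoulli_pmf (25/82)))"

definition mu_B :: "real pmf" where
  "mu_B = map_pmf (\<lambda>c. if c then 1 else 3) (bernoulli_pmf (3/100))"

definition D_A :: "(real \<times> int) pmf" where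
  "D_A = bind_pmf mu_A (\<lambda>x. map_pmf (\<lambda>flip. (x, if flip then - label_A x else label_A x))
      (bernoulli_pmf (1/5)))"

definition D_B :: "(real \<times> int) pmf" where
  "D_B = bind_pmf mu_B (\<lambda>x. map_pmf (\<lambda>flip. (x, if flip then - label_B x else label_B x))
      (bernoulli_pmf (3/10)))"

lemma noisy_label_pmf_D_A: "noisy_label_pmf D_A mu_A label_A (1/5)"
  by (simp add: noisy_label_pmf_def D_A_def label_A_def)

lemma noisy_label_pmf_D_B: "noisy_label_pmf D_B mu_B label_B (3/10)"
  by (simp add: noisy_label_pmf_def D_B_def label_B_def)

lemma finite_set_pmf_D_A: "finite (set_pmf D_A)"
  by (simp add: D_A_def mu_A_def set_bind_pmf)

lemma finite_set_pmf_D_B: "finite (set_pmf D_B)"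
  by (simp add: D_B_def mu_B_def set_bind_pmf)

lemma expectation_D_A: "measure_pmf.expectation D_A (h :: real \<times> int \<Rightarrow> real) =
   9/50 * (4/5 * h (0,-1) + 1/5 * h (0,1)) +
   1/4 * (4/5 * h (1,1) + 1/5 * h (1,-1)) + 57/100 * (4/5 * h (3,1) + 1/5 * h (3,-1))"
  unfolding D_A_def mu_A_def
  by (simp add: expectation_bind_pmf_finite set_bind_pmf label_A_def algebra_simps)

lemma expectation_D_B: "measure_pmf.expectation D_B (h :: real \<times> int \<Rightarrow> real) =
   3/100 * (7/10 * h (1,-1) + 3/10 * h (1,1)) + 97/100 * (7/10 * h (3,1) + 3/10 * h (3,-1))"
  unfolding D_B_def mu_B_def
  by (simp add: expectation_bind_pmf_finite label_B_def algebra_simps)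

lemma measure_D_A: "measure_pmf.prob D_A A =
   9/50 * (4/5 * indicator A (0,-1) + 1/5 * indicator A (0,1)) +
   1/4 * (4/5 * indicator A (1,1) + 1/5 * indicator A (1,-1)) +
   57/100 * (4/5 * indicator A (3,1) + 1/5 * indicator A (3,-1))"
proof -
  have "measure_pmf.prob D_A A = measure_pmf.expectation D_A (indicator A)" by simp
  then show ?thesis by (simp only: expectation_D_A)
qed

lemma measure_D_B: "measure_pmf.prob D_B A =
   3/100 * (7/10 * indicator A (1,-1) + 3/10 * indicator A (1,1)) +
   97/100 * (7/10 * indicator A (3,1) + 3/10 * indicator A (3,-1))"
proof -
  have "measure_pmf.prob D_B A = measure_pmf.expectation D_B (indicator A)" by simp
  then show ?thesis by (simp only: expectation_D_B)
qed

lemmas example_expectations = nn2_accuracy_def expectation_D_A expectation_D_B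
  measure_D_A measure_D_B nn_predict_two_points dist_real_def indicator_def

lemma nn2_accuracy_on_D_A:
  "nn2_accuracy D_A D_A D_A = 152099/250000"
  "nn2_accuracy D_A D_A D_B = 7439971/12500000"
  "nn2_accuracy D_A D_B D_A = 7156579/12500000"
  "nn2_accuracy D_A D_B D_B = 143921/250000"
  by (simp_all add: example_expectations)

lemma nn2_accuracy_on_D_B:
  "nn2_accuracy D_B D_A D_A = 75871/125000"
  "nn2_accuracy D_B D_A D_B = 7462013/12500000"
  "nn2_accuracy D_B D_B D_A = 287381/500000"
  "nn2_accuracy D_B D_B D_B = 35959/62500"
  by (simp_all add: example_expectations)

definition payoff_gap :: "real \<Rightarrow> real" where
  "payoff_gap s = 17/50000 - 7311/1562500 * s + 9011/1562500 * s\<^sup>2"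

lemma nn_game_example_gap:
  assumes "p \<in> simplex2"
  shows "nn_game 2 D_A D_B GA p - nn_game 2 D_A D_B GB p = payoff_gap (fst p)"
  using assms
  by (simp add: nn_game_2 finite_set_pmf_D_A finite_set_pmf_D_B nn2_accuracy_on_D_A
      nn2_accuracy_on_D_B) (simp add: payoff_gap_def power2_eq_square field_simps)

lemma payoff_gap_root: "\<exists>q. 0 < q \<and> q < 1/10 \<and> payoff_gap q = 0"
proof -
  have cont: "continuous_on {0..1/10} payoff_gap" unfolding payoff_gap_def by (intro continuous_intros)
  have neg: "payoff_gap (1/10) < 0" and pos: "0 < payoff_gap 0"
    by (simp_all add: payoff_gap_def power2_eq_square)
  have "\<exists>q. 0 \<le> q \<and> q \<le> 1/10 \<and> payoff_gap q = 0"
    by (rule IVT2'[OF less_imp_le[OF neg] less_imp_le[OF pos] _ cont]) simp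
  then obtain q where q: "0 \<le> q" "q \<le> 1/10" "payoff_gap q = 0" by blast
  moreover have "q \<noteq> 0" "q \<noteq> 1/10" using q(3) neg pos by (metis less_irrefl)+
  ultimately show ?thesis by (intro exI[of _ q]) simp
qed

lemma payoff_gap_crosses_down:
  assumes "payoff_gap q = 0" "s + q < 4/5" "s \<noteq> q"
  shows "(s - q) * payoff_gap s < 0"
proof -
  have "payoff_gap s = payoff_gap s - payoff_gap q" using assms(1) by simp
  also have "\<dots> = (s - q) * (9011/1562500 * (s + q) - 7311/1562500)"
    by (simp add: payoff_gap_def power2_eq_square field_simps)
  finally have "(s - q) * payoff_gap s = (s - q)\<^sup>2 * (9011/1562500 * (s + q) - 7311/1562500)"
    by (simp add: power2_eq_square)
  also have "\<dots> < 0"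
    using assms(2,3) by (intro mult_pos_neg) auto
  finally show ?thesis .
qed

theorem theorem6:
  shows "\<exists>(DA :: (real \<times> int) pmf) (DB :: (real \<times> int) pmf) muA muB hA hB etaA etaB n q.
     noisy_label_pmf DA muA hA etaA \<and> noisy_label_pmf DB muB hB etaB \<and> etaA + etaB > 0 \<and>
     n \<ge> 1 \<and>
     stable_equilibrium (nn_game n DA DB) q \<and> fst q > 0 \<and> snd q > 0"
proof -
  obtain q where q: "0 < q" "q < 1/10" "payoff_gap q = 0"
    using payoff_gap_root by blast
  have gap: "nn_game 2 D_A D_B GA (s, 1 - s) - nn_game 2 D_A D_B GB (s, 1 - s) = payoff_gap s"
    if "0 \<le> s" "s \<le> 1" for s
    using nn_game_example_gap[of "(s, 1 - s)"] that by (simp add: simplex2_def)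
  have "stable_equilibrium (nn_game 2 D_A D_B) (q, 1 - q)"
  proof (rule stable_equilibrium_if_gap_crosses_down[where \<delta> = "q / 2"])
    show "nn_game 2 D_A D_B GA (q, 1 - q) = nn_game 2 D_A D_B GB (q, 1 - q)"
      using gap[of q] q by simp
  next
    fix s assume s: "\<bar>s - q\<bar> \<le> q / 2" "s \<noteq> q"
    then have "0 \<le> s" "s \<le> 1" "s + q < 4/5" using q unfolding abs_le_iff by linarith+
    then show "(s - q) * (nn_game 2 D_A D_B GA (s, 1 - s) - nn_game 2 D_A D_B GB (s, 1 - s)) < 0"
      using gap payoff_gap_crosses_down[OF q(3)] s(2) by simp
  qed (use q in auto)
  then show ?thesis
    using noisy_label_pmf_D_A noisy_label_pmf_D_B q
    by (intro exI[of _ D_A] exI[of _ D_B] exI[of _ mu_A] exI[of _ mu_B] exI[of _ label_A]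
        exI[of _ label_B] exI[of _ "1/5"] exI[of _ "3/10"] exI[of _ "2::nat"]
        exI[of _ "(q, 1 - q)"]) auto
qed

end
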